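(* Assume $V=L$. Let $\xi_0,\xi_1,\xi_2,\dots\in\Xi$, let $\vartheta=\bigcup_n\xi_n$, and let $X\in\mathrm{IPS}_\vartheta$. Then $X=\bigcap_n\big((X\restriction\xi_n)\uparrow\vartheta\big)$. In particular, $X=\bigcap_{i\in\vartheta}\big((X\restriction[\subseteq i])\uparrow\vartheta\big)$.
   Context: $T$ is the set of all nonempty finite sequences of countable ordinals, ordered by strict extension $\subset$; $[\subseteq i]=\{j\in T:j\subseteq i\}$. $\Xi$ is the set of all at most countable $\xi\subseteq T$ closed downward under $\subset$. $D=2^\omega$; $D^\xi$ is the product of $\xi$ copies of $D$. For $\eta\subseteq\xi$ in $\Xi$: $x\restriction\eta$ is restriction of $x\in D^\xi$, $X\restriction\eta=\{x\restriction\eta:x\in X\}$ for $X\subseteq D^\xi$, and $Y\uparrow\xi=\{x\in D^\xi:x\restriction\eta\in Y\}$ for $Y\subseteq D^\eta$. For $\zeta\in\Xi$, $\mathrm{IPS}_\zeta$ is the set of all $X\subseteq D^\zeta$ for which there is a homeomorphism $H$ of $D^\zeta$ onto $X$ such that for all $x_0,x_1\in D^\zeta$ and all $\xi\in\Xi$, $\xi\subseteq\zeta$: $x_0\restriction\xi=x_1\restriction\xi\iff H(x_0)\restriction\xi=H(x_1)\restriction\xi$. *)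

theory Defs
  imports "HOL-Analysis.Analysis" "HOL-Library.Sublist"
begin

(* Countable ordinals: elements of a type 'o carrying a well-order r of order type omega_1,
   i.e. well_order_on UNIV r and r =o cardSuc natLeq (stated in the theorem).
   T = nonempty finite sequences (lists) over 'o; strict extension = strict prefix. *)

definition Tset :: "'o list set" where
  "Tset = {i. i \<noteq> []}"

definition below_eq :: "'o list \<Rightarrow> 'o list set" where
  "below_eq i = {j \<in> Tset. prefix j i}"

definition Xi :: "'o list set set" where
  "Xi = {\<xi>. \<xi> \<subseteq> Tset \<and> countable \<xi> \<and>
              (\<forall>i\<in>\<xi>. \<forall>j\<in>Tset. strict_prefix j i \<longrightarrow> j \<in> \<xi>)}"

definition Dtop :: "(nat \<Rightarrow> bool) topology" where
  "Dtop = product_topology (\<lambda>_. discrete_topology UNIV) UNIV"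

definition Dpow :: "'o list set \<Rightarrow> ('o list \<Rightarrow> nat \<Rightarrow> bool) topology" where
  "Dpow \<xi> = product_topology (\<lambda>_. Dtop) \<xi>"

definition proj :: "'o list set \<Rightarrow> ('o list \<Rightarrow> nat \<Rightarrow> bool) set \<Rightarrow> ('o list \<Rightarrow> nat \<Rightarrow> bool) set" where
  "proj \<eta> X = (\<lambda>x. restrict x \<eta>) ` X"

definition lift :: "'o list set \<Rightarrow> 'o list set \<Rightarrow> ('o list \<Rightarrow> nat \<Rightarrow> bool) set \<Rightarrow> ('o list \<Rightarrow> nat \<Rightarrow> bool) set" where
  "lift \<xi> \<eta> Y = {x \<in> topspace (Dpow \<xi>). restrict x \<eta> \<in> Y}"

definition IPS :: "'o list set \<Rightarrow> ('o list \<Rightarrow> nat \<Rightarrow> bool) set set" where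
  "IPS \<zeta> = {X. X \<subseteq> topspace (Dpow \<zeta>) \<and>
     (\<exists>H. homeomorphic_map (Dpow \<zeta>) (subtopology (Dpow \<zeta>) X) H \<and>
          (\<forall>x0\<in>topspace (Dpow \<zeta>). \<forall>x1\<in>topspace (Dpow \<zeta>). \<forall>\<xi>\<in>Xi. \<xi> \<subseteq> \<zeta> \<longrightarrow>
              (restrict x0 \<xi> = restrict x1 \<xi> \<longleftrightarrow> restrict (H x0) \<xi> = restrict (H x1) \<xi>)))}"

end

theory Submission
  imports Defs
begin

(* Let H witness X \<in> IPS \<theta> and let y agree on every \<xi>\<^sub>n with some point of X, say with H a\<^sub>n.
   Since H preserves equality of restrictions to members of Xi, and Xi is closed under
   intersection, the preimages a\<^sub>n agree pairwise on \<xi>\<^sub>n \<inter> \<xi>\<^sub>m, so they glue to a single a.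
   Then H a agrees with H a\<^sub>n, hence with y, on each \<xi>\<^sub>n; as the \<xi>\<^sub>n cover \<theta>, y = H a \<in> X. *)

lemma topspace_Dpow: "topspace (Dpow \<theta>) = extensional \<theta>"
  unfolding Dpow_def Dtop_def topspace_product_topology PiE_def by simp

lemma Xi_Int: "A \<in> Xi \<Longrightarrow> B \<in> Xi \<Longrightarrow> A \<inter> B \<in> Xi"
  unfolding Xi_def by auto

lemma Xi_UN:
  assumes "countable I" and "\<And>n. n \<in> I \<Longrightarrow> \<xi> n \<in> Xi"
  shows "(\<Union>n\<in>I. \<xi> n) \<in> Xi"
  using assms unfolding Xi_def by auto

lemma below_eq_in_Xi: "below_eq i \<in> Xi"
proof -
  have "below_eq i \<subseteq> Tset"
    unfolding below_eq_def by blast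
  moreover have "below_eq i \<subseteq> set (prefixes i)"
    unfolding below_eq_def by auto
  then have "countable (below_eq i)"
    by (meson countable_finite finite_set finite_subset)
  moreover have "k \<in> below_eq i" if "j \<in> below_eq i" "k \<in> Tset" "strict_prefix k j" for j k
    using that prefix_order.trans[OF prefix_order.strict_implies_order[OF that(3)]]
    unfolding below_eq_def by blast
  ultimately show ?thesis
    unfolding Xi_def by blast
qed

lemma below_eq_subset:
  assumes "\<theta> \<in> Xi" and "i \<in> \<theta>"
  shows "below_eq i \<subseteq> \<theta>"
proof
  fix j assume "j \<in> below_eq i"
  then have "j \<in> Tset" "j = i \<or> strict_prefix j i"
    unfolding below_eq_def strict_prefix_def by auto
  then show "j \<in> \<theta>"
    using assms unfolding Xi_def by blast
qed

lemma UN_below_eq: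
  assumes "\<theta> \<in> Xi"
  shows "(\<Union>i\<in>\<theta>. below_eq i) = \<theta>"
proof -
  have "i \<in> below_eq i" if "i \<in> \<theta>" for i
    using assms that unfolding Xi_def below_eq_def by auto
  then show ?thesis
    using below_eq_subset[OF assms] by blast
qed

lemma glue_compatible_family:
  assumes "\<And>n m i. n \<in> I \<Longrightarrow> m \<in> I \<Longrightarrow> i \<in> \<xi> n \<Longrightarrow> i \<in> \<xi> m \<Longrightarrow> f n i = f m i"
  obtains g where "g \<in> extensional (\<Union>n\<in>I. \<xi> n)"
    and "\<And>n. n \<in> I \<Longrightarrow> restrict g (\<xi> n) = restrict (f n) (\<xi> n)"
proof
  define N where "N i = (SOME n. n \<in> I \<and> i \<in> \<xi> n)" for i
  have N: "N i \<in> I \<and> i \<in> \<xi> (N i)" if "i \<in> (\<Union>n\<in>I. \<xi> n)" for i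
    unfolding N_def by (rule someI_ex) (use that in blast)
  show "(\<lambda>i\<in>\<Union>n\<in>I. \<xi> n. f (N i) i) \<in> extensional (\<Union>n\<in>I. \<xi> n)"
    by simp
  show "restrict (\<lambda>i\<in>\<Union>n\<in>I. \<xi> n. f (N i) i) (\<xi> n) = restrict (f n) (\<xi> n)" if "n \<in> I" for n
  proof
    fix i
    show "restrict (\<lambda>i\<in>\<Union>n\<in>I. \<xi> n. f (N i) i) (\<xi> n) i = restrict (f n) (\<xi> n) i"
    proof (cases "i \<in> \<xi> n")
      case True
      then have "i \<in> (\<Union>n\<in>I. \<xi> n)"
        using that by blast
      then show ?thesis
        using N assms[of "N i" n i] True that by simp
    qed simp
  qed
qed

lemma IPS_E:
  assumes "X \<in> IPS \<theta>"
  obtains H where "X \<subseteq> topspace (Dpow \<theta>)" and "H ` topspace (Dpow \<theta>) = X"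
    and "\<And>x0 x1 \<eta>. \<lbrakk>x0 \<in> topspace (Dpow \<theta>); x1 \<in> topspace (Dpow \<theta>); \<eta> \<in> Xi; \<eta> \<subseteq> \<theta>\<rbrakk>
           \<Longrightarrow> restrict x0 \<eta> = restrict x1 \<eta> \<longleftrightarrow> restrict (H x0) \<eta> = restrict (H x1) \<eta>"
proof -
  obtain H where X_sub: "X \<subseteq> topspace (Dpow \<theta>)"
    and hom: "homeomorphic_map (Dpow \<theta>) (subtopology (Dpow \<theta>) X) H"
    and H_restr: "\<forall>x0\<in>topspace (Dpow \<theta>). \<forall>x1\<in>topspace (Dpow \<theta>). \<forall>\<eta>\<in>Xi. \<eta> \<subseteq> \<theta> \<longrightarrow>
           (restrict x0 \<eta> = restrict x1 \<eta> \<longleftrightarrow> restrict (H x0) \<eta> = restrict (H x1) \<eta>)"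
    using assms unfolding IPS_def by blast
  have "H ` topspace (Dpow \<theta>) = X"
    using homeomorphic_imp_surjective_map[OF hom] X_sub by (simp add: Int_absorb1)
  with X_sub show ?thesis
    by (rule that) (use H_restr in blast)
qed

lemma IPS_mem_if_restrictions_mem:
  assumes X: "X \<in> IPS \<theta>"
    and \<xi>: "\<And>n. n \<in> I \<Longrightarrow> \<xi> n \<in> Xi" and \<theta>: "\<theta> = (\<Union>n\<in>I. \<xi> n)"
    and y: "y \<in> topspace (Dpow \<theta>)"
    and y_restr: "\<And>n. n \<in> I \<Longrightarrow> restrict y (\<xi> n) \<in> proj (\<xi> n) X"
  shows "y \<in> X"
proof -
  obtain H where X_sub: "X \<subseteq> topspace (Dpow \<theta>)" and H_onto: "H ` topspace (Dpow \<theta>) = X"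
    and H_restr: "\<And>x0 x1 \<eta>. \<lbrakk>x0 \<in> topspace (Dpow \<theta>); x1 \<in> topspace (Dpow \<theta>); \<eta> \<in> Xi; \<eta> \<subseteq> \<theta>\<rbrakk>
           \<Longrightarrow> restrict x0 \<eta> = restrict x1 \<eta> \<longleftrightarrow> restrict (H x0) \<eta> = restrict (H x1) \<eta>"
    by (rule IPS_E[OF X]) (rule that)
  have \<xi>_sub: "\<xi> n \<subseteq> \<theta>" if "n \<in> I" for n
    using \<theta> that by blast
  have "\<exists>a \<in> topspace (Dpow \<theta>). restrict (H a) (\<xi> n) = restrict y (\<xi> n)" if "n \<in> I" for n
    using y_restr[OF that] H_onto unfolding proj_def by force
  then obtain a where a: "\<And>n. n \<in> I \<Longrightarrow> a n \<in> topspace (Dpow \<theta>)"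
    and Ha: "\<And>n. n \<in> I \<Longrightarrow> restrict (H (a n)) (\<xi> n) = restrict y (\<xi> n)"
    by metis
  have Ha_pointwise: "H (a n) i = y i" if "n \<in> I" "i \<in> \<xi> n" for n i
    using fun_cong[OF Ha[OF that(1)], of i] that by simp
  have "a n i = a m i" if "n \<in> I" "m \<in> I" "i \<in> \<xi> n" "i \<in> \<xi> m" for n m i
  proof -
    have "restrict (H (a n)) (\<xi> n \<inter> \<xi> m) = restrict (H (a m)) (\<xi> n \<inter> \<xi> m)"
      using Ha_pointwise that by (auto simp: restrict_def)
    then have "restrict (a n) (\<xi> n \<inter> \<xi> m) = restrict (a m) (\<xi> n \<inter> \<xi> m)"
      using H_restr[of "a n" "a m" "\<xi> n \<inter> \<xi> m"] a \<xi> \<xi>_sub Xi_Int that by blast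
    from fun_cong[OF this, of i] show ?thesis
      using that by simp
  qed
  then obtain b where b: "b \<in> topspace (Dpow \<theta>)"
    and b_restr: "\<And>n. n \<in> I \<Longrightarrow> restrict b (\<xi> n) = restrict (a n) (\<xi> n)"
    using glue_compatible_family[of I \<xi> a] \<theta> topspace_Dpow by metis
  have "H b i = y i" if "n \<in> I" "i \<in> \<xi> n" for n i
  proof -
    have "restrict (H b) (\<xi> n) = restrict y (\<xi> n)"
      using H_restr[OF b a, of n "\<xi> n"] b_restr Ha \<xi> \<xi>_sub that by simp
    from fun_cong[OF this, of i] show ?thesis
      using that by simp
  qed
  moreover have "H b \<in> extensional \<theta>" "y \<in> extensional \<theta>"
    using H_onto b X_sub y topspace_Dpow by blast+
  ultimately have "H b = y"
    using \<theta> by (intro extensionalityI[of "H b" \<theta> y]) auto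
  then show ?thesis
    using H_onto b by blast
qed

lemma IPS_eq_Inter_lift_proj:
  assumes "X \<in> IPS \<theta>" and "\<And>n. n \<in> I \<Longrightarrow> \<xi> n \<in> Xi" and "\<theta> = (\<Union>n\<in>I. \<xi> n)"
  shows "X = topspace (Dpow \<theta>) \<inter> (\<Inter>n\<in>I. lift \<theta> (\<xi> n) (proj (\<xi> n) X))"
proof -
  have "X \<subseteq> topspace (Dpow \<theta>)"
    by (rule IPS_E[OF assms(1)])
  then have "X \<subseteq> lift \<theta> \<eta> (proj \<eta> X)" for \<eta>
    unfolding lift_def proj_def by auto
  moreover have "y \<in> X" if "y \<in> topspace (Dpow \<theta>) \<inter> (\<Inter>n\<in>I. lift \<theta> (\<xi> n) (proj (\<xi> n) X))" for y
    using IPS_mem_if_restrictions_mem[OF assms] that unfolding lift_def by blast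
  ultimately show ?thesis
    using \<open>X \<subseteq> topspace (Dpow \<theta>)\<close> by blast
qed

theorem lemma2p25:
  fixes r :: "'o rel" and \<xi> :: "nat \<Rightarrow> 'o list set"
    and \<theta> :: "'o list set" and X :: "('o list \<Rightarrow> nat \<Rightarrow> bool) set"
  assumes "well_order_on UNIV r" and "ordIso2 r (cardSuc natLeq)"
    and "\<And>n. \<xi> n \<in> Xi"
    and "\<theta> = (\<Union>n. \<xi> n)"
    and "X \<in> IPS \<theta>"
  shows "X = (\<Inter>n. lift \<theta> (\<xi> n) (proj (\<xi> n) X)) \<and>
         X = topspace (Dpow \<theta>) \<inter> (\<Inter>i\<in>\<theta>. lift \<theta> (below_eq i) (proj (below_eq i) X))"
proof
  have "(\<Inter>n. lift \<theta> (\<xi> n) (proj (\<xi> n) X)) \<subseteq> topspace (Dpow \<theta>)"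
    unfolding lift_def by blast
  then show "X = (\<Inter>n. lift \<theta> (\<xi> n) (proj (\<xi> n) X))"
    using IPS_eq_Inter_lift_proj[of X \<theta> UNIV \<xi>] assms(3-5) by blast
  have "\<theta> \<in> Xi"
    using Xi_UN[of UNIV \<xi>] assms(3,4) by simp
  from IPS_eq_Inter_lift_proj[OF assms(5) below_eq_in_Xi UN_below_eq[OF this, symmetric]]
  show "X = topspace (Dpow \<theta>) \<inter> (\<Inter>i\<in>\<theta>. lift \<theta> (below_eq i) (proj (below_eq i) X))" .
qed

end
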